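(* Let $\mathcal{T}=[t_{i,j,k}]\in\mathrm{Sym}(2,3)$. If $\mathcal{T}$ has a best rank one approximation that is not symmetric, then $\mathcal{T}$ is a nonzero scalar multiple of the tensor $\mathcal{T}_\theta\in\mathrm{Sym}(2,3)$ with entries $t_{1,1,1}=\cos\theta$, $t_{1,1,2}=\sin\theta$, $t_{1,2,2}=-\cos\theta$, $t_{2,2,2}=-\sin\theta$ (the remaining entries determined by symmetry) for some $\theta\in[0,2\pi)$. Moreover, for $\mathcal{T}=\mathcal{T}_\theta$: for arbitrary $\mathbf{u},\mathbf{v}\in\mathrm{S}^1$ there is a vector $\mathbf{w}(\mathbf{u},\mathbf{v})\in\mathrm{S}^1$, uniquely determined by $\mathbf{u},\mathbf{v}$, such that $\mathbf{u}\otimes\mathbf{v}\otimes\mathbf{w}(\mathbf{u},\mathbf{v})$ is a best rank one approximation of $\mathcal{T}_\theta$; and $\mathcal{T}_\theta$ has exactly three (distinct) symmetric best rank one approximations.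
   Context: $\mathrm{Sym}(2,3)$ is the space of real tensors $[t_{i,j,k}]_{i,j,k=1}^2$ invariant under all permutations of indices. $\mathrm{S}^1$ is the unit circle in $\mathbb{R}^2$. Inner product $\langle\mathcal{S},\mathcal{T}\rangle=\sum s_{i,j,k}t_{i,j,k}$, norm $\|\mathcal{T}\|=\sqrt{\langle\mathcal{T},\mathcal{T}\rangle}$. A best rank one approximation of $\mathcal{T}$ is a tensor $a\,\mathbf{x}\otimes\mathbf{y}\otimes\mathbf{z}$ ($a\in\mathbb{R}$, $\mathbf{x},\mathbf{y},\mathbf{z}\in\mathrm{S}^1$) minimizing $\|\mathcal{T}-s\,\mathbf{x}'\otimes\mathbf{y}'\otimes\mathbf{z}'\|$ over $s\in\mathbb{R}$, $\mathbf{x}',\mathbf{y}',\mathbf{z}'\in\mathrm{S}^1$. It is symmetric if it is a symmetric tensor, i.e. of the form $b\,\mathbf{u}\otimes\mathbf{u}\otimes\mathbf{u}$. *)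

theory Defs
  imports "HOL-Analysis.Analysis"
begin

text \<open>Real 2x2x2 tensors are modelled as elements of real^2^2^2, entry t_{i,j,k} = T$i$j$k,
 with the index type 2 whose elements are 1 and 2.\<close>

type_synonym tensor3 = "real^2^2^2"

definition is_sym :: "tensor3 \<Rightarrow> bool" where
  "is_sym T \<longleftrightarrow> (\<forall>i j k.
      T$i$j$k = T$i$k$j \<and> T$i$j$k = T$j$i$k \<and> T$i$j$k = T$j$k$i \<and>
      T$i$j$k = T$k$i$j \<and> T$i$j$k = T$k$j$i)"

definition S1 :: "(real^2) set" where
  "S1 = {x. norm x = 1}"

definition outer3 :: "real^2 \<Rightarrow> real^2 \<Rightarrow> real^2 \<Rightarrow> tensor3" where
  "outer3 x y z = (\<chi> i j k. x$i * y$j * z$k)"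

definition tinner :: "tensor3 \<Rightarrow> tensor3 \<Rightarrow> real" where
  "tinner S T = (\<Sum>i\<in>UNIV. \<Sum>j\<in>UNIV. \<Sum>k\<in>UNIV. S$i$j$k * T$i$j$k)"

definition tnorm :: "tensor3 \<Rightarrow> real" where
  "tnorm T = sqrt (tinner T T)"

definition is_best_rank_one :: "tensor3 \<Rightarrow> tensor3 \<Rightarrow> bool" where
  "is_best_rank_one T B \<longleftrightarrow>
     (\<exists>a x y z. x \<in> S1 \<and> y \<in> S1 \<and> z \<in> S1 \<and> B = a *\<^sub>R outer3 x y z) \<and>
     (\<forall>s x' y' z'. x' \<in> S1 \<and> y' \<in> S1 \<and> z' \<in> S1 \<longrightarrow>
        tnorm (T - B) \<le> tnorm (T - s *\<^sub>R outer3 x' y' z'))"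

definition cnt2 :: "2 \<Rightarrow> 2 \<Rightarrow> 2 \<Rightarrow> nat" where
  "cnt2 i j k = (if i = 2 then 1 else 0) + (if j = 2 then 1 else 0) + (if k = 2 then 1 else 0)"

definition T_theta :: "real \<Rightarrow> tensor3" where
  "T_theta \<theta> = (\<chi> i j k.
     (if cnt2 i j k = 0 then cos \<theta>
      else if cnt2 i j k = 1 then sin \<theta>
      else if cnt2 i j k = 2 then - cos \<theta>
      else - sin \<theta>))"

end

theory Submission
  imports Defs
begin

text \<open>A best rank one approximation of T is f(x, y, z) x \<otimes> y \<otimes> z for a maximiser (x, y, z) of
  |f| on unit vectors, where f(x, y, z) = \<langle>T, x \<otimes> y \<otimes> z\<rangle>. If a maximiser has x \<noteq> \<plusminus>y, the bilinear form f(\<cdot>, \<cdot>, z) attains its maximum over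
  pairs of unit vectors at a non-parallel pair, which forces its trace to vanish; this trace is
  the trace vector of T paired with z. The form f(\<cdot>, \<cdot>, z) is then a multiple of a reflection,
  so the same maximum is attained with any prescribed second argument, and by the symmetry of f
  this gives non-parallel maximising pairs for all but two antipodal third arguments. Hence the
  trace vector of T vanishes, i.e. T is a multiple of some T_\<theta>.

  In complex coordinates f(u, v, w) = Re (e^(-i\<theta>) u v w) for T_\<theta>, which is at most 1 with
  equality iff u v w = e^(i\<theta>). So w is determined by u and v, and the symmetric best
  approximations v \<otimes> v \<otimes> v correspond to the three cube roots v of e^(i\<theta>).\<close>

section \<open>Best rank one approximations\<close>

lemma in_S1_iff: "x \<in> S1 \<longleftrightarrow> (x$1)^2 + (x$2)^2 = 1"
  by (simp add: S1_def norm_vec_def L2_set_def sum_2)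

lemma uminus_in_S1_iff [simp]: "-z \<in> S1 \<longleftrightarrow> z \<in> S1"
  by (simp add: S1_def)

lemma vec2_eq_iff: "(x::real^2) = y \<longleftrightarrow> x$1 = y$1 \<and> x$2 = y$2"
  by (simp add: vec_eq_iff forall_2)

definition tensor_form :: "tensor3 \<Rightarrow> real^2 \<Rightarrow> real^2 \<Rightarrow> real^2 \<Rightarrow> real" where
  "tensor_form T x y z = tinner T (outer3 x y z)"

lemma tinner_diff_rank_one:
  assumes "x \<in> S1" "y \<in> S1" "z \<in> S1"
  shows "tinner (T - s *\<^sub>R outer3 x y z) (T - s *\<^sub>R outer3 x y z)
    = tinner T T - (tensor_form T x y z)^2 + (s - tensor_form T x y z)^2"
proof -
  have "tinner (T - s *\<^sub>R outer3 x y z) (T - s *\<^sub>R outer3 x y z)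
      = tinner T T - 2 * s * tensor_form T x y z
        + s^2 * (((x$1)^2 + (x$2)^2) * ((y$1)^2 + (y$2)^2) * ((z$1)^2 + (z$2)^2))"
    unfolding tensor_form_def tinner_def outer3_def
    by (simp add: sum_2 power2_eq_square algebra_simps)
  also have "\<dots> = tinner T T - 2 * s * tensor_form T x y z + s^2"
    using assms by (simp add: in_S1_iff)
  finally show ?thesis
    by (simp add: power2_eq_square algebra_simps)
qed

lemma is_best_rank_one_iff_max:
  "is_best_rank_one T B \<longleftrightarrow> (\<exists>x y z. x \<in> S1 \<and> y \<in> S1 \<and> z \<in> S1 \<and>
     B = tensor_form T x y z *\<^sub>R outer3 x y z \<and>
     (\<forall>x' y' z'. x' \<in> S1 \<and> y' \<in> S1 \<and> z' \<in> S1 \<longrightarrow>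
        \<bar>tensor_form T x' y' z'\<bar> \<le> \<bar>tensor_form T x y z\<bar>))"
  (is "_ \<longleftrightarrow> (\<exists>x y z. ?max x y z)")
proof
  assume best: "is_best_rank_one T B"
  then obtain a x y z where xyz: "x \<in> S1" "y \<in> S1" "z \<in> S1" and B: "B = a *\<^sub>R outer3 x y z"
    unfolding is_best_rank_one_def by blast
  have le: "tinner T T - (tensor_form T x y z)^2 + (a - tensor_form T x y z)^2
      \<le> tinner T T - (tensor_form T x' y' z')^2 + (s - tensor_form T x' y' z')^2"
    if "x' \<in> S1" "y' \<in> S1" "z' \<in> S1" for s x' y' z'
    using best that unfolding is_best_rank_one_def B tnorm_def real_sqrt_le_iff
    by (simp add: tinner_diff_rank_one xyz that)
  from le[OF xyz, of "tensor_form T x y z"] have a: "a = tensor_form T x y z"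
    by simp
  have "\<bar>tensor_form T x' y' z'\<bar> \<le> \<bar>tensor_form T x y z\<bar>"
    if "x' \<in> S1" "y' \<in> S1" "z' \<in> S1" for x' y' z'
    using le[OF that, of "tensor_form T x' y' z'"] by (simp add: a abs_le_square_iff)
  then show "\<exists>x y z. ?max x y z"
    using xyz B a by blast
next
  assume "\<exists>x y z. ?max x y z"
  then obtain x y z where xyz: "x \<in> S1" "y \<in> S1" "z \<in> S1"
    and B: "B = tensor_form T x y z *\<^sub>R outer3 x y z"
    and max: "\<And>x' y' z'. x' \<in> S1 \<Longrightarrow> y' \<in> S1 \<Longrightarrow> z' \<in> S1 \<Longrightarrow>
                 \<bar>tensor_form T x' y' z'\<bar> \<le> \<bar>tensor_form T x y z\<bar>"
    by blast
  have dist: "tinner (T - B) (T - B) \<le> tinner (T - s *\<^sub>R outer3 x' y' z') (T - s *\<^sub>R outer3 x' y' z')"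
    if "x' \<in> S1" "y' \<in> S1" "z' \<in> S1" for s x' y' z'
  proof -
    have "(tensor_form T x' y' z')^2 \<le> (tensor_form T x y z)^2"
      using max[OF that] by (simp add: abs_le_square_iff)
    moreover have "tinner (T - B) (T - B) = tinner T T - (tensor_form T x y z)^2"
      by (simp add: B tinner_diff_rank_one xyz)
    moreover have "tinner (T - s *\<^sub>R outer3 x' y' z') (T - s *\<^sub>R outer3 x' y' z')
        = tinner T T - (tensor_form T x' y' z')^2 + (s - tensor_form T x' y' z')^2"
      by (simp add: tinner_diff_rank_one that)
    ultimately show ?thesis
      using zero_le_power2[of "s - tensor_form T x' y' z'"] by linarith
  qed
  then show "is_best_rank_one T B"
    unfolding is_best_rank_one_def tnorm_def real_sqrt_le_iff using xyz B dist by blast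
qed

section \<open>Symmetric bilinear and trilinear forms on the unit circle\<close>

definition sym_bilinear :: "real \<Rightarrow> real \<Rightarrow> real \<Rightarrow> real \<Rightarrow> real \<Rightarrow> real \<Rightarrow> real \<Rightarrow> real" where
  "sym_bilinear a b d u1 u2 v1 v2 = a * u1 * v1 + b * (u1 * v2 + u2 * v1) + d * u2 * v2"

lemma sym_bilinear_diag_bound:
  assumes max: "\<And>u1 u2 v1 v2. u1^2 + u2^2 = 1 \<Longrightarrow> v1^2 + v2^2 = 1 \<Longrightarrow>
                  sym_bilinear a b d u1 u2 v1 v2 \<le> M"
  shows "\<bar>sym_bilinear a b d w1 w2 w1 w2\<bar> \<le> M * (w1^2 + w2^2)"
proof (cases "w1 = 0 \<and> w2 = 0")
  case True
  then show ?thesis by (simp add: sym_bilinear_def)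
next
  case False
  define n where "n = sqrt (w1^2 + w2^2)"
  have "0 < w1^2 + w2^2"
    using False by (simp add: sum_power2_gt_zero_iff)
  then have n2: "n^2 = w1^2 + w2^2" and n: "n > 0"
    by (simp_all add: n_def)
  have unit: "(w1/n)^2 + (w2/n)^2 = 1" "(-w1/n)^2 + (-w2/n)^2 = 1"
    using n n2 False by (simp_all add: power_divide add_divide_distrib[symmetric])
  have "sym_bilinear a b d (w1/n) (w2/n) (w1/n) (w2/n) = sym_bilinear a b d w1 w2 w1 w2 / n^2"
    "sym_bilinear a b d (w1/n) (w2/n) (-w1/n) (-w2/n) = - sym_bilinear a b d w1 w2 w1 w2 / n^2"
    using n by (simp_all add: sym_bilinear_def power2_eq_square field_simps)
  then have "sym_bilinear a b d w1 w2 w1 w2 / n^2 \<le> M" "(- sym_bilinear a b d w1 w2 w1 w2) / n^2 \<le> M"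
    using max[OF unit(1) unit(1)] max[OF unit(1) unit(2)] by simp_all
  then have "\<bar>sym_bilinear a b d w1 w2 w1 w2 / n^2\<bar> \<le> M"
    by (simp add: abs_le_iff)
  then show ?thesis
    unfolding n2[symmetric] using n by (simp add: abs_divide pos_divide_le_eq)
qed

text \<open>For unit vectors x \<noteq> \<plusminus>y, the vectors s = x + y and e = x - y are nonzero, orthogonal and
  satisfy |s|^2 + |e|^2 = 4; the diagonal bounds at s and e are then forced to be equalities,
  and the resulting identity forces the trace to vanish.\<close>
lemma sym_bilinear_max_trace_zero:
  assumes max: "\<And>u1 u2 v1 v2. u1^2 + u2^2 = 1 \<Longrightarrow> v1^2 + v2^2 = 1 \<Longrightarrow>
                  sym_bilinear a b d u1 u2 v1 v2 \<le> sym_bilinear a b d x1 x2 y1 y2"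
    and x: "x1^2 + x2^2 = 1" and y: "y1^2 + y2^2 = 1"
    and not_eq: "\<not> (x1 = y1 \<and> x2 = y2)" and not_opp: "\<not> (x1 = -y1 \<and> x2 = -y2)"
  shows "a + d = 0"
proof -
  define M where "M = sym_bilinear a b d x1 x2 y1 y2"
  define s1 s2 e1 e2 where "s1 = x1 + y1" "s2 = x2 + y2" "e1 = x1 - y1" "e2 = x2 - y2"
  define S E where "S = s1^2 + s2^2" "E = e1^2 + e2^2"
  have "\<bar>sym_bilinear a b d s1 s2 s1 s2\<bar> \<le> M * S" "\<bar>sym_bilinear a b d e1 e2 e1 e2\<bar> \<le> M * E"
    unfolding S_E_def using sym_bilinear_diag_bound[OF max[folded M_def]] by blast+
  then have bound_s: "sym_bilinear a b d s1 s2 s1 s2 \<le> M * S"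
    and bound_e: "- sym_bilinear a b d e1 e2 e1 e2 \<le> M * E"
    by (simp_all only: abs_le_iff)
  have "S + E = 2 * (x1^2 + x2^2) + 2 * (y1^2 + y2^2)"
    and "s1 * e1 + s2 * e2 = (x1^2 + x2^2) - (y1^2 + y2^2)"
    by (simp_all add: S_E_def s1_s2_e1_e2_def power2_eq_square algebra_simps)
  then have "S + E = 4" and orth: "s1 * e1 + s2 * e2 = 0"
    using x y by simp_all
  have "sym_bilinear a b d s1 s2 s1 s2 - sym_bilinear a b d e1 e2 e1 e2 = 4 * M"
    by (simp add: M_def sym_bilinear_def s1_s2_e1_e2_def algebra_simps)
  moreover have "M * S + M * E = 4 * M"
    using \<open>S + E = 4\<close> by (simp add: distrib_left[symmetric])
  ultimately have eq_s: "sym_bilinear a b d s1 s2 s1 s2 = M * S"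
    and eq_e: "sym_bilinear a b d e1 e2 e1 e2 = - M * E"
    using bound_s bound_e by linarith+
  have "S > 0" "E > 0"
    using not_eq not_opp by (auto simp: S_E_def s1_s2_e1_e2_def sum_power2_gt_zero_iff)
  have "sym_bilinear a b d s1 s2 s1 s2 * E + sym_bilinear a b d e1 e2 e1 e2 * S - (a + d) * S * E
      = (s1 * e1 + s2 * e2) * (a * (s1 * e1 - s2 * e2) + 2 * b * (s2 * e1 + s1 * e2) + d * (s2 * e2 - s1 * e1))"
    by (simp add: sym_bilinear_def S_E_def power2_eq_square algebra_simps)
  then have "M * S * E + (- M * E) * S - (a + d) * S * E = 0"
    using orth eq_s eq_e by simp
  then have "(a + d) * S * E = 0"
    by (simp add: algebra_simps)
  then show ?thesis
    using \<open>S > 0\<close> \<open>E > 0\<close> by simp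
qed

lemma trace_free_bilinear_le:
  assumes "u1^2 + u2^2 = 1" "v1^2 + v2^2 = 1"
  shows "sym_bilinear \<alpha> \<beta> (-\<alpha>) u1 u2 v1 v2 \<le> sqrt (\<alpha>^2 + \<beta>^2)"
proof (rule real_le_rsqrt)
  have "(sym_bilinear \<alpha> \<beta> (-\<alpha>) u1 u2 v1 v2)^2
        + (u1 * (\<beta> * v1 - \<alpha> * v2) - u2 * (\<alpha> * v1 + \<beta> * v2))^2
      = (u1^2 + u2^2) * (\<alpha>^2 + \<beta>^2) * (v1^2 + v2^2)"
    by (simp add: sym_bilinear_def power2_eq_square algebra_simps)
  then have "(sym_bilinear \<alpha> \<beta> (-\<alpha>) u1 u2 v1 v2)^2
      + (u1 * (\<beta> * v1 - \<alpha> * v2) - u2 * (\<alpha> * v1 + \<beta> * v2))^2 = \<alpha>^2 + \<beta>^2"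
    by (simp only: assms mult_1 mult_1_right)
  then show "(sym_bilinear \<alpha> \<beta> (-\<alpha>) u1 u2 v1 v2)^2 \<le> \<alpha>^2 + \<beta>^2"
    using zero_le_power2[of "u1 * (\<beta> * v1 - \<alpha> * v2) - u2 * (\<alpha> * v1 + \<beta> * v2)"] by linarith
qed

text \<open>Here x = A y / \<rho> for the matrix A of the form; since A^2 = \<rho>^2, also A x = \<rho> y.\<close>
lemma trace_free_bilinear_attained:
  assumes y: "y1^2 + y2^2 = 1" and \<rho>: "\<rho> = sqrt (\<alpha>^2 + \<beta>^2)" "\<rho> > 0"
  defines "x1 \<equiv> (\<alpha> * y1 + \<beta> * y2) / \<rho>" and "x2 \<equiv> (\<beta> * y1 - \<alpha> * y2) / \<rho>"
  shows "x1^2 + x2^2 = 1" and "sym_bilinear \<alpha> \<beta> (-\<alpha>) x1 x2 y1 y2 = \<rho>"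
    and "\<alpha> * x1 + \<beta> * x2 = \<rho> * y1" and "\<beta> * x1 - \<alpha> * x2 = \<rho> * y2"
proof -
  have \<rho>2: "\<rho> * \<rho> = \<alpha>^2 + \<beta>^2"
    using \<rho> by (simp flip: power2_eq_square)
  have "x1^2 + x2^2 = (\<alpha>^2 + \<beta>^2) * (y1^2 + y2^2) / (\<rho> * \<rho>)"
    by (simp add: x1_def x2_def power_divide add_divide_distrib[symmetric] power2_eq_square algebra_simps)
  then show "x1^2 + x2^2 = 1"
    using y \<rho>2 \<rho> by (simp add: sum_power2_gt_zero_iff)
  have "sym_bilinear \<alpha> \<beta> (-\<alpha>) x1 x2 y1 y2 = x1 * (\<alpha> * y1 + \<beta> * y2) + x2 * (\<beta> * y1 - \<alpha> * y2)"
    by (simp add: sym_bilinear_def algebra_simps)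
  also have "\<dots> = ((\<alpha> * y1 + \<beta> * y2)^2 + (\<beta> * y1 - \<alpha> * y2)^2) / \<rho>"
    by (simp add: x1_def x2_def power2_eq_square add_divide_distrib[symmetric])
  also have "\<dots> = (\<alpha>^2 + \<beta>^2) * (y1^2 + y2^2) / \<rho>"
    by (simp add: power2_eq_square algebra_simps)
  also have "\<dots> = \<rho>"
    using y \<rho> by (simp add: \<rho>2[symmetric])
  finally show "sym_bilinear \<alpha> \<beta> (-\<alpha>) x1 x2 y1 y2 = \<rho>" .
  have x1: "x1 * \<rho> = \<alpha> * y1 + \<beta> * y2" and x2: "x2 * \<rho> = \<beta> * y1 - \<alpha> * y2"
    using \<rho> by (simp_all add: x1_def x2_def)
  have "(\<alpha> * x1 + \<beta> * x2) * \<rho> = \<alpha> * (x1 * \<rho>) + \<beta> * (x2 * \<rho>)"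
    and "(\<beta> * x1 - \<alpha> * x2) * \<rho> = \<beta> * (x1 * \<rho>) - \<alpha> * (x2 * \<rho>)"
    by (simp_all add: algebra_simps)
  moreover have "\<alpha> * (x1 * \<rho>) + \<beta> * (x2 * \<rho>) = (\<rho> * \<rho>) * y1"
    and "\<beta> * (x1 * \<rho>) - \<alpha> * (x2 * \<rho>) = (\<rho> * \<rho>) * y2"
    unfolding x1 x2 \<rho>2 by (simp_all add: power2_eq_square algebra_simps)
  ultimately have "(\<alpha> * x1 + \<beta> * x2) * \<rho> = (\<rho> * y1) * \<rho>"
    and "(\<beta> * x1 - \<alpha> * x2) * \<rho> = (\<rho> * y2) * \<rho>"
    by (simp_all add: algebra_simps)
  then show "\<alpha> * x1 + \<beta> * x2 = \<rho> * y1" "\<beta> * x1 - \<alpha> * x2 = \<rho> * y2"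
    using \<rho>(2) by simp_all
qed

lemma linear_form_zero_off_antipodes:
  fixes c1 c2 e1 e2 :: real
  assumes "\<And>y1 y2. y1^2 + y2^2 = 1 \<Longrightarrow> \<not> (y1 = e1 \<and> y2 = e2) \<Longrightarrow> \<not> (y1 = -e1 \<and> y2 = -e2) \<Longrightarrow>
             c1 * y1 + c2 * y2 = 0"
  shows "c1 = 0 \<and> c2 = 0"
proof -
  have "c1 * 1 + c2 * 0 = 0" if "\<not> (e1 = 1 \<and> e2 = 0)" "\<not> (e1 = -1 \<and> e2 = 0)"
    by (rule assms) (use that in auto)
  moreover have "c1 * 0 + c2 * 1 = 0" if "\<not> (e1 = 0 \<and> e2 = 1)" "\<not> (e1 = 0 \<and> e2 = -1)"
    by (rule assms) (use that in auto)
  moreover have "c1 * (3/5) + c2 * (4/5) = 0"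
    if "\<not> (e1 = 3/5 \<and> e2 = 4/5)" "\<not> (e1 = -3/5 \<and> e2 = -4/5)"
    by (rule assms) (use that in \<open>auto simp: power2_eq_square\<close>)
  ultimately show ?thesis
    by (cases "e2 = 0"; cases "e1 = 0") auto
qed

definition sym_trilinear ::
    "real \<Rightarrow> real \<Rightarrow> real \<Rightarrow> real \<Rightarrow> real \<Rightarrow> real \<Rightarrow> real \<Rightarrow> real \<Rightarrow> real \<Rightarrow> real \<Rightarrow> real" where
  "sym_trilinear t0 t1 t2 t3 x1 x2 y1 y2 z1 z2 =
     t0 * x1 * y1 * z1 + t1 * (x1 * y1 * z2 + x1 * y2 * z1 + x2 * y1 * z1)
     + t2 * (x1 * y2 * z2 + x2 * y1 * z2 + x2 * y2 * z1) + t3 * x2 * y2 * z2"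

lemma sym_trilinear_eq_sym_bilinear:
  "sym_trilinear t0 t1 t2 t3 x1 x2 y1 y2 z1 z2
     = sym_bilinear (t0 * z1 + t1 * z2) (t1 * z1 + t2 * z2) (t2 * z1 + t3 * z2) x1 x2 y1 y2"
  by (simp add: sym_trilinear_def sym_bilinear_def algebra_simps)

lemma sym_trilinear_swap23:
  "sym_trilinear t0 t1 t2 t3 x1 x2 y1 y2 z1 z2 = sym_trilinear t0 t1 t2 t3 x1 x2 z1 z2 y1 y2"
  by (simp add: sym_trilinear_def algebra_simps)

lemma sym_trilinear_rotate:
  "sym_trilinear t0 t1 t2 t3 x1 x2 y1 y2 z1 z2 = sym_trilinear t0 t1 t2 t3 y1 y2 z1 z2 x1 x2"
  by (simp add: sym_trilinear_def algebra_simps)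

lemma sym_trilinear_max_trace_zero:
  assumes max: "\<And>u1 u2 v1 v2 w1 w2. u1^2 + u2^2 = 1 \<Longrightarrow> v1^2 + v2^2 = 1 \<Longrightarrow> w1^2 + w2^2 = 1 \<Longrightarrow>
                  sym_trilinear t0 t1 t2 t3 u1 u2 v1 v2 w1 w2 \<le> M"
    and p: "p1^2 + p2^2 = 1" and q: "q1^2 + q2^2 = 1" and r: "r1^2 + r2^2 = 1"
    and attained: "sym_trilinear t0 t1 t2 t3 p1 p2 q1 q2 r1 r2 = M"
    and not_eq: "\<not> (p1 = q1 \<and> p2 = q2)" and not_opp: "\<not> (p1 = -q1 \<and> p2 = -q2)"
  shows "(t0 + t2) * r1 + (t1 + t3) * r2 = 0"
proof -
  have "(t0 * r1 + t1 * r2) + (t2 * r1 + t3 * r2) = 0"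
    by (rule sym_bilinear_max_trace_zero[where b = "t1 * r1 + t2 * r2", OF _ p q not_eq not_opp])
      (use max r attained in \<open>simp flip: sym_trilinear_eq_sym_bilinear\<close>)
  then show ?thesis
    by (simp add: algebra_simps)
qed

lemma sym_trilinear_max_trace_free:
  assumes max: "\<And>u1 u2 v1 v2 w1 w2. u1^2 + u2^2 = 1 \<Longrightarrow> v1^2 + v2^2 = 1 \<Longrightarrow> w1^2 + w2^2 = 1 \<Longrightarrow>
                  sym_trilinear t0 t1 t2 t3 u1 u2 v1 v2 w1 w2 \<le> M"
    and p: "p1^2 + p2^2 = 1" and q: "q1^2 + q2^2 = 1" and r: "r1^2 + r2^2 = 1"
    and attained: "sym_trilinear t0 t1 t2 t3 p1 p2 q1 q2 r1 r2 = M" and "M > 0"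
    and not_eq: "\<not> (p1 = q1 \<and> p2 = q2)" and not_opp: "\<not> (p1 = -q1 \<and> p2 = -q2)"
  shows "t0 + t2 = 0 \<and> t1 + t3 = 0"
proof -
  define \<alpha> \<beta> where "\<alpha> = t0 * r1 + t1 * r2" "\<beta> = t1 * r1 + t2 * r2"
  define \<rho> where "\<rho> = sqrt (\<alpha>^2 + \<beta>^2)"
  define g1 g2 where "g1 = (\<alpha> * r1 + \<beta> * r2) / \<rho>" "g2 = (\<beta> * r1 - \<alpha> * r2) / \<rho>"
  have "(t0 + t2) * r1 + (t1 + t3) * r2 = 0"
    by (rule sym_trilinear_max_trace_zero[OF max p q r attained not_eq not_opp])
  then have at_r: "sym_trilinear t0 t1 t2 t3 u1 u2 v1 v2 r1 r2 = sym_bilinear \<alpha> \<beta> (-\<alpha>) u1 u2 v1 v2"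
    for u1 u2 v1 v2
    unfolding sym_trilinear_eq_sym_bilinear \<alpha>_\<beta>_def
    by (simp add: algebra_simps add_eq_0_iff2 flip: minus_add_distrib)
  have "M \<le> \<rho>"
    using trace_free_bilinear_le[OF p q, of \<alpha> \<beta>] attained by (simp add: at_r \<rho>_def)
  then have "\<rho> > 0"
    using \<open>M > 0\<close> by simp
  have "(t0 + t2) * y1 + (t1 + t3) * y2 = 0"
    if y: "y1^2 + y2^2 = 1"
      and "\<not> (y1 = g1 \<and> y2 = g2)" and "\<not> (y1 = -g1 \<and> y2 = -g2)"
    for y1 y2
  proof -
    define x1 x2 where "x1 = (\<alpha> * y1 + \<beta> * y2) / \<rho>" "x2 = (\<beta> * y1 - \<alpha> * y2) / \<rho>"
    note x = trace_free_bilinear_attained[OF y \<rho>_def \<open>\<rho> > 0\<close>, folded x1_x2_def]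
    have "sym_trilinear t0 t1 t2 t3 x1 x2 y1 y2 r1 r2 = \<rho>"
      using x(2) by (simp add: at_r)
    then have "sym_trilinear t0 t1 t2 t3 x1 x2 r1 r2 y1 y2 = M"
      using max[OF x(1) y r] \<open>M \<le> \<rho>\<close> by (simp add: sym_trilinear_swap23[of _ _ _ _ x1 x2 y1 y2])
    moreover have "\<not> (x1 = r1 \<and> x2 = r2)" "\<not> (x1 = -r1 \<and> x2 = -r2)"
      using that(2,3) x(3,4) \<open>\<rho> > 0\<close> by (auto simp: g1_g2_def field_simps)
    ultimately show ?thesis
      using sym_trilinear_max_trace_zero[OF max x(1) r y] by blast
  qed
  then show ?thesis
    by (rule linear_form_zero_off_antipodes)
qed

section \<open>Symmetric tensors with a non-symmetric best rank one approximation\<close>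

lemma is_sym_entries:
  assumes "is_sym T"
  shows "T$1$2$1 = T$1$1$2" "T$2$1$1 = T$1$1$2" "T$2$1$2 = T$1$2$2" "T$2$2$1 = T$1$2$2"
  using assms unfolding is_sym_def by metis+

lemma tensor_form_sym:
  assumes "is_sym T"
  shows "tensor_form T x y z
    = sym_trilinear (T$1$1$1) (T$1$1$2) (T$1$2$2) (T$2$2$2) (x$1) (x$2) (y$1) (y$2) (z$1) (z$2)"
  using is_sym_entries[OF assms]
  by (simp add: tensor_form_def tinner_def outer3_def sym_trilinear_def sum_2 algebra_simps)

lemma outer3_uminus3: "outer3 x y (-z) = - outer3 x y z"
  by (simp add: outer3_def vec_eq_iff)

lemma tensor_form_uminus3: "tensor_form T x y (-z) = - tensor_form T x y z"
  by (simp add: tensor_form_def tinner_def outer3_def sum_2 algebra_simps)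

lemma is_sym_scaleR_outer3_parallel:
  assumes "x = y \<or> x = -y" "z = y \<or> z = -y"
  shows "is_sym (a *\<^sub>R outer3 x y z)"
  using assms unfolding is_sym_def outer3_def by (auto simp: algebra_simps)

lemma is_best_rank_one_positive_max:
  assumes "is_best_rank_one T B" "B \<noteq> 0"
  obtains x y z where "x \<in> S1" "y \<in> S1" "z \<in> S1"
    "B = tensor_form T x y z *\<^sub>R outer3 x y z" "tensor_form T x y z > 0"
    "\<And>x' y' z'. x' \<in> S1 \<Longrightarrow> y' \<in> S1 \<Longrightarrow> z' \<in> S1 \<Longrightarrow> tensor_form T x' y' z' \<le> tensor_form T x y z"
proof -
  obtain x y z where xyz: "x \<in> S1" "y \<in> S1" "z \<in> S1"
    and B: "B = tensor_form T x y z *\<^sub>R outer3 x y z"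
    and max: "\<And>x' y' z'. x' \<in> S1 \<Longrightarrow> y' \<in> S1 \<Longrightarrow> z' \<in> S1 \<Longrightarrow>
                 \<bar>tensor_form T x' y' z'\<bar> \<le> \<bar>tensor_form T x y z\<bar>"
    using assms(1) unfolding is_best_rank_one_iff_max by blast
  obtain z0 where z0: "z0 \<in> S1" "B = tensor_form T x y z0 *\<^sub>R outer3 x y z0"
    "tensor_form T x y z0 = \<bar>tensor_form T x y z\<bar>"
  proof (cases "tensor_form T x y z \<ge> 0")
    case True
    then show ?thesis using that[of z] xyz B by simp
  next
    case False
    then show ?thesis using that[of "-z"] xyz B by (simp add: tensor_form_uminus3 outer3_uminus3)
  qed
  have "tensor_form T x y z \<noteq> 0"
    using assms(2) B by auto
  then show ?thesis
    using that[OF xyz(1,2) z0(1,2)] max z0(3) by (simp add: abs_le_iff)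
qed

lemma sym_trilinear_le_if_tensor_form_le:
  assumes "is_sym T"
    and max: "\<And>x y z. x \<in> S1 \<Longrightarrow> y \<in> S1 \<Longrightarrow> z \<in> S1 \<Longrightarrow> tensor_form T x y z \<le> M"
    and "u1^2 + u2^2 = 1" "v1^2 + v2^2 = 1" "w1^2 + w2^2 = 1"
  shows "sym_trilinear (T$1$1$1) (T$1$1$2) (T$1$2$2) (T$2$2$2) u1 u2 v1 v2 w1 w2 \<le> M"
proof -
  have "vector [u1, u2] \<in> S1" "vector [v1, v2] \<in> S1" "(vector [w1, w2] :: real^2) \<in> S1"
    using assms(3-5) by (simp_all add: in_S1_iff)
  from max[OF this] show ?thesis
    by (simp add: tensor_form_sym[OF assms(1)])
qed

text \<open>(T$1$1$1 + T$1$2$2, T$1$1$2 + T$2$2$2) is the trace vector of T, the contraction of its last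
  two indices.\<close>
lemma trace_free_if_best_rank_one_not_sym:
  assumes T: "is_sym T" and best: "is_best_rank_one T B" and "\<not> is_sym B"
  shows "T$1$1$1 + T$1$2$2 = 0 \<and> T$1$1$2 + T$2$2$2 = 0 \<and> T \<noteq> 0"
proof -
  let ?F = "sym_trilinear (T$1$1$1) (T$1$1$2) (T$1$2$2) (T$2$2$2)"
  have "B \<noteq> 0"
    using assms(3) by (auto simp: is_sym_def)
  then obtain x y z where xyz: "x \<in> S1" "y \<in> S1" "z \<in> S1"
    and B: "B = tensor_form T x y z *\<^sub>R outer3 x y z" and pos: "tensor_form T x y z > 0"
    and max: "\<And>x' y' z'. x' \<in> S1 \<Longrightarrow> y' \<in> S1 \<Longrightarrow> z' \<in> S1 \<Longrightarrow> tensor_form T x' y' z' \<le> tensor_form T x y z"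
    using is_best_rank_one_positive_max[OF best] by blast
  note max' = sym_trilinear_le_if_tensor_form_le[OF T max]
  have attained: "?F (x$1) (x$2) (y$1) (y$2) (z$1) (z$2) = tensor_form T x y z"
    by (simp add: tensor_form_sym[OF T])
  have unit: "\<And>v. v \<in> S1 \<Longrightarrow> (v$1)^2 + (v$2)^2 = 1"
    by (simp add: in_S1_iff)
  have not_parallel: "\<not> ((x = y \<or> x = -y) \<and> (z = y \<or> z = -y))"
    using assms(3) B is_sym_scaleR_outer3_parallel by blast
  have "T$1$1$1 + T$1$2$2 = 0 \<and> T$1$1$2 + T$2$2$2 = 0"
  proof (cases "x = y \<or> x = -y")
    case False
    with pos show ?thesis
      by (intro sym_trilinear_max_trace_free[OF max' unit[OF xyz(1)] unit[OF xyz(2)] unit[OF xyz(3)] attained])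
        (auto simp: vec2_eq_iff)
  next
    case True
    with not_parallel have "\<not> (y = z \<or> y = -z)"
      by auto
    moreover have "?F (y$1) (y$2) (z$1) (z$2) (x$1) (x$2) = tensor_form T x y z"
      using attained by (simp add: sym_trilinear_rotate[of _ _ _ _ "x$1"])
    ultimately show ?thesis using pos
      by (intro sym_trilinear_max_trace_free[OF max' unit[OF xyz(2)] unit[OF xyz(3)] unit[OF xyz(1)]])
        (auto simp: vec2_eq_iff)
  qed
  moreover have "T \<noteq> 0"
    using pos by (auto simp: tensor_form_def tinner_def)
  ultimately show ?thesis
    by blast
qed

lemma sym_trace_free_eq_T_theta:
  assumes T: "is_sym T" and trace: "T$1$1$1 + T$1$2$2 = 0" "T$1$1$2 + T$2$2$2 = 0" and "T \<noteq> 0"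
  shows "\<exists>c \<theta>. c \<noteq> 0 \<and> 0 \<le> \<theta> \<and> \<theta> < 2 * pi \<and> T = c *\<^sub>R T_theta \<theta>"
proof -
  define c where "c = sqrt ((T$1$1$1)^2 + (T$1$1$2)^2)"
  have "c \<noteq> 0"
  proof
    assume "c = 0"
    then have "T$1$1$1 = 0" "T$1$1$2 = 0"
      by (simp_all add: c_def sum_power2_eq_zero_iff)
    then have "T = 0"
      using is_sym_entries[OF T] trace by (simp add: vec_eq_iff forall_2)
    with \<open>T \<noteq> 0\<close> show False ..
  qed
  then have "(T$1$1$1 / c)^2 + (T$1$1$2 / c)^2 = 1"
    by (simp add: c_def power_divide add_divide_distrib[symmetric] sum_power2_eq_zero_iff)
  then obtain \<theta> where \<theta>: "0 \<le> \<theta>" "\<theta> < 2 * pi" "T$1$1$1 / c = cos \<theta>" "T$1$1$2 / c = sin \<theta>"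
    using sincos_total_2pi by metis
  then have "T$1$1$1 = c * cos \<theta>" "T$1$1$2 = c * sin \<theta>"
    using \<open>c \<noteq> 0\<close> by (simp_all add: field_simps)
  moreover have "T$1$2$2 = - T$1$1$1" "T$2$2$2 = - T$1$1$2"
    using trace by simp_all
  ultimately have "T = c *\<^sub>R T_theta \<theta>"
    using is_sym_entries[OF T] by (simp add: vec_eq_iff forall_2 T_theta_def cnt2_def)
  then show ?thesis
    using \<theta> \<open>c \<noteq> 0\<close> by blast
qed

section \<open>The tensors T_\<theta> in complex coordinates\<close>

definition complex_of_vec2 :: "real^2 \<Rightarrow> complex" where
  "complex_of_vec2 v = Complex (v$1) (v$2)"

definition vec2_of_complex :: "complex \<Rightarrow> real^2" where
  "vec2_of_complex z = vector [Re z, Im z]"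

lemma complex_of_vec2_inverse [simp]: "complex_of_vec2 (vec2_of_complex z) = z"
  by (simp add: complex_of_vec2_def vec2_of_complex_def complex_eq_iff)

lemma vec2_of_complex_inverse [simp]: "vec2_of_complex (complex_of_vec2 v) = v"
  by (simp add: complex_of_vec2_def vec2_of_complex_def vec2_eq_iff)

lemma in_S1_iff_cmod: "v \<in> S1 \<longleftrightarrow> cmod (complex_of_vec2 v) = 1"
  by (simp add: in_S1_iff complex_of_vec2_def cmod_def)

lemma tensor_form_T_theta:
  "tensor_form (T_theta \<theta>) u v w
     = Re (cis (-\<theta>) * complex_of_vec2 u * complex_of_vec2 v * complex_of_vec2 w)"
  unfolding tensor_form_def tinner_def outer3_def T_theta_def complex_of_vec2_def cis.ctr complex_mult
  by (simp add: sum_2 cnt2_def algebra_simps)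

lemma cmod_T_theta_product:
  assumes "u \<in> S1" "v \<in> S1" "w \<in> S1"
  shows "cmod (cis (-\<theta>) * complex_of_vec2 u * complex_of_vec2 v * complex_of_vec2 w) = 1"
  using assms by (simp add: in_S1_iff_cmod norm_mult)

lemma T_theta_form_abs_le_1:
  assumes "u \<in> S1" "v \<in> S1" "w \<in> S1"
  shows "\<bar>tensor_form (T_theta \<theta>) u v w\<bar> \<le> 1"
  using abs_Re_le_cmod cmod_T_theta_product[OF assms] by (metis tensor_form_T_theta)

lemma T_theta_form_eq_1_iff:
  assumes "u \<in> S1" "v \<in> S1" "w \<in> S1"
  shows "tensor_form (T_theta \<theta>) u v w = 1
    \<longleftrightarrow> cis (-\<theta>) * complex_of_vec2 u * complex_of_vec2 v * complex_of_vec2 w = 1"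
proof -
  have "Re z = 1 \<longleftrightarrow> z = 1" if "cmod z = 1" for z :: complex
    using that by (auto simp: cmod_def complex_eq_iff)
  then show ?thesis
    unfolding tensor_form_T_theta using cmod_T_theta_product[OF assms] by blast
qed

lemma T_theta_third_factor_unique:
  assumes "u \<in> S1" "v \<in> S1"
  shows "\<exists>!w. w \<in> S1 \<and> tensor_form (T_theta \<theta>) u v w = 1"
proof -
  define a where "a = cis (-\<theta>) * complex_of_vec2 u * complex_of_vec2 v"
  have "cmod a = 1"
    using assms by (simp add: a_def in_S1_iff_cmod norm_mult)
  then have "a * cnj a = 1"
    using complex_norm_square[of a] by simp
  have "a \<noteq> 0"
    using \<open>cmod a = 1\<close> by auto
  have form: "tensor_form (T_theta \<theta>) u v w = 1 \<longleftrightarrow> a * complex_of_vec2 w = 1" if "w \<in> S1" for w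
    using T_theta_form_eq_1_iff[OF assms that] by (simp add: a_def)
  show ?thesis
  proof (rule ex1I)
    show "vec2_of_complex (cnj a) \<in> S1 \<and> tensor_form (T_theta \<theta>) u v (vec2_of_complex (cnj a)) = 1"
      using \<open>cmod a = 1\<close> \<open>a * cnj a = 1\<close> by (simp add: in_S1_iff_cmod form)
    fix w
    assume "w \<in> S1 \<and> tensor_form (T_theta \<theta>) u v w = 1"
    then have "a * complex_of_vec2 w = a * cnj a"
      using form \<open>a * cnj a = 1\<close> by auto
    then have "complex_of_vec2 w = cnj a"
      using \<open>a \<noteq> 0\<close> by simp
    then show "w = vec2_of_complex (cnj a)"
      by (metis vec2_of_complex_inverse)
  qed
qed

lemma is_best_rank_one_T_theta_iff:
  "is_best_rank_one (T_theta \<theta>) B \<longleftrightarrow>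
     (\<exists>x y z. x \<in> S1 \<and> y \<in> S1 \<and> z \<in> S1 \<and> tensor_form (T_theta \<theta>) x y z = 1 \<and> B = outer3 x y z)"
proof
  assume "is_best_rank_one (T_theta \<theta>) B"
  then obtain x y z where xyz: "x \<in> S1" "y \<in> S1" "z \<in> S1"
    and B: "B = tensor_form (T_theta \<theta>) x y z *\<^sub>R outer3 x y z"
    and max: "\<And>x' y' z'. x' \<in> S1 \<Longrightarrow> y' \<in> S1 \<Longrightarrow> z' \<in> S1 \<Longrightarrow>
                \<bar>tensor_form (T_theta \<theta>) x' y' z'\<bar> \<le> \<bar>tensor_form (T_theta \<theta>) x y z\<bar>"
    unfolding is_best_rank_one_iff_max by blast
  obtain w where w: "w \<in> S1" "tensor_form (T_theta \<theta>) x x w = 1"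
    using T_theta_third_factor_unique[OF xyz(1) xyz(1)] by blast
  have "1 \<le> \<bar>tensor_form (T_theta \<theta>) x y z\<bar>"
    using max[OF xyz(1) xyz(1) w(1)] w(2) by simp
  then have "tensor_form (T_theta \<theta>) x y z = 1 \<or> tensor_form (T_theta \<theta>) x y z = -1"
    using T_theta_form_abs_le_1[OF xyz, of \<theta>] by arith
  then obtain z' where "z' \<in> S1" "tensor_form (T_theta \<theta>) x y z' = 1" "B = outer3 x y z'"
  proof
    assume "tensor_form (T_theta \<theta>) x y z = 1"
    then show ?thesis
      using that[of z] xyz B by simp
  next
    assume "tensor_form (T_theta \<theta>) x y z = -1"
    then show ?thesis
      using that[of "-z"] xyz B by (simp add: tensor_form_uminus3 outer3_uminus3)
  qed
  with xyz show "\<exists>x y z. x \<in> S1 \<and> y \<in> S1 \<and> z \<in> S1 \<and> tensor_form (T_theta \<theta>) x y z = 1 \<and> B = outer3 x y z"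
    by blast
next
  assume "\<exists>x y z. x \<in> S1 \<and> y \<in> S1 \<and> z \<in> S1 \<and> tensor_form (T_theta \<theta>) x y z = 1 \<and> B = outer3 x y z"
  then obtain x y z where xyz: "x \<in> S1" "y \<in> S1" "z \<in> S1"
    and one: "tensor_form (T_theta \<theta>) x y z = 1" and B: "B = outer3 x y z"
    by blast
  show "is_best_rank_one (T_theta \<theta>) B"
    unfolding is_best_rank_one_iff_max
  proof (intro exI conjI allI impI)
    show "B = tensor_form (T_theta \<theta>) x y z *\<^sub>R outer3 x y z"
      using B one by simp
    fix x' y' z'
    assume "x' \<in> S1 \<and> y' \<in> S1 \<and> z' \<in> S1"
    then show "\<bar>tensor_form (T_theta \<theta>) x' y' z'\<bar> \<le> \<bar>tensor_form (T_theta \<theta>) x y z\<bar>"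
      using T_theta_form_abs_le_1 one by simp
  qed (fact xyz)+
qed

lemma is_best_rank_one_T_theta_outer3_iff:
  assumes "u \<in> S1" "v \<in> S1" "w \<in> S1"
  shows "is_best_rank_one (T_theta \<theta>) (outer3 u v w) \<longleftrightarrow> tensor_form (T_theta \<theta>) u v w = 1"
  using assms unfolding is_best_rank_one_T_theta_iff by (metis tensor_form_def)

lemma unit_vec2_parallel:
  assumes "x \<in> S1" "y \<in> S1" "x$1 * y$2 = x$2 * y$1"
  shows "x = y \<or> x = -y"
proof -
  define d where "d = x$1 * y$1 + x$2 * y$2"
  have "d^2 = ((x$1)^2 + (x$2)^2) * ((y$1)^2 + (y$2)^2) - (x$1 * y$2 - x$2 * y$1)^2"
    by (simp add: d_def power2_eq_square algebra_simps)
  then have d: "d = 1 \<or> d = -1"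
    using assms by (simp add: in_S1_iff power2_eq_1_iff)
  have diff: "(x$1 - y$1)^2 + (x$2 - y$2)^2 = 2 - 2 * d"
    and sum: "(x$1 + y$1)^2 + (x$2 + y$2)^2 = 2 + 2 * d"
    using assms(1,2) by (simp_all add: in_S1_iff d_def power2_eq_square algebra_simps)
  from d show ?thesis
  proof
    assume "d = 1"
    then have "x$1 - y$1 = 0 \<and> x$2 - y$2 = 0"
      using diff by (simp add: sum_power2_eq_zero_iff)
    then show ?thesis
      by (simp add: vec2_eq_iff)
  next
    assume "d = -1"
    then have "x$1 + y$1 = 0 \<and> x$2 + y$2 = 0"
      using sum by (simp add: sum_power2_eq_zero_iff)
    then show ?thesis
      by (simp add: vec2_eq_iff eq_neg_iff_add_eq_0)
  qed
qed

lemma is_sym_outer3_eq_cube: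
  assumes xyz: "x \<in> S1" "y \<in> S1" "z \<in> S1" and "is_sym (outer3 x y z)"
  obtains v where "v \<in> S1" "outer3 x y z = outer3 v v v"
proof -
  have swap12: "x$1 * y$2 * z$k = x$2 * y$1 * z$k" and swap23: "x$k * y$1 * z$2 = x$k * y$2 * z$1" for k
    using assms(4) unfolding is_sym_def outer3_def by simp_all
  have nonzero: "v$1 \<noteq> 0 \<or> v$2 \<noteq> 0" if "v \<in> S1" for v :: "real^2"
    using that by (auto simp: in_S1_iff)
  have "x$1 * y$2 = x$2 * y$1"
    using swap12[of 1] swap12[of 2] nonzero[OF xyz(3)] by auto
  then have xy: "x = y \<or> x = -y"
    by (rule unit_vec2_parallel[OF xyz(1,2)])
  have "y$1 * z$2 = y$2 * z$1"
    using swap23[of 1] swap23[of 2] nonzero[OF xyz(1)] by (auto simp: mult.assoc)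
  then have yz: "y = z \<or> y = -z"
    by (rule unit_vec2_parallel[OF xyz(2,3)])
  show ?thesis
  proof (cases "x = y")
    case True
    then show ?thesis
      using that[of z] xyz(3) yz by (auto simp: outer3_def vec_eq_iff)
  next
    case False
    then show ?thesis
      using that[of "-z"] xyz(3) xy yz by (auto simp: outer3_def vec_eq_iff)
  qed
qed

lemma T_theta_cube_form_eq_1_iff:
  assumes "v \<in> S1"
  shows "tensor_form (T_theta \<theta>) v v v = 1 \<longleftrightarrow> (complex_of_vec2 v)^3 = cis \<theta>"
proof -
  have "cis (-\<theta>) * z = 1 \<longleftrightarrow> z = cis \<theta>" for z
  proof
    assume "cis (-\<theta>) * z = 1"
    then have "cis \<theta> * (cis (-\<theta>) * z) = cis \<theta>"
      by simp
    then show "z = cis \<theta>"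
      by (simp add: mult.assoc[symmetric] cis_mult)
  qed (simp add: cis_mult)
  then show ?thesis
    using T_theta_form_eq_1_iff[OF assms assms assms, of \<theta>] by (simp add: power3_eq_cube mult.assoc)
qed

lemma cmod_cube_root_cis:
  assumes "z^3 = cis \<theta>"
  shows "cmod z = 1"
proof -
  have "cmod z ^ 3 = 1 ^ 3"
    using assms by (simp add: norm_power[symmetric])
  then show ?thesis
    using power_eq_iff_eq_base[of 3 "cmod z" 1] by simp
qed

lemma sym_best_rank_one_T_theta_eq:
  "{B. is_best_rank_one (T_theta \<theta>) B \<and> is_sym B}
     = (\<lambda>v. outer3 v v v) ` vec2_of_complex ` {z. z^3 = cis \<theta>}"
proof (intro set_eqI iffI)
  fix B
  assume "B \<in> {B. is_best_rank_one (T_theta \<theta>) B \<and> is_sym B}"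
  then have best: "is_best_rank_one (T_theta \<theta>) B" and "is_sym B"
    by simp_all
  then obtain x y z where xyz: "x \<in> S1" "y \<in> S1" "z \<in> S1" and B: "B = outer3 x y z"
    unfolding is_best_rank_one_T_theta_iff by blast
  obtain v where v: "v \<in> S1" "B = outer3 v v v"
    using is_sym_outer3_eq_cube[OF xyz] \<open>is_sym B\<close> unfolding B by blast
  then have "(complex_of_vec2 v)^3 = cis \<theta>"
    using best by (simp add: is_best_rank_one_T_theta_outer3_iff T_theta_cube_form_eq_1_iff)
  with v show "B \<in> (\<lambda>v. outer3 v v v) ` vec2_of_complex ` {z. z^3 = cis \<theta>}"
    by (auto intro!: image_eqI[of _ _ "complex_of_vec2 v"])
next
  fix B
  assume "B \<in> (\<lambda>v. outer3 v v v) ` vec2_of_complex ` {z. z^3 = cis \<theta>}"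
  then obtain z where z: "z^3 = cis \<theta>" and B: "B = outer3 (vec2_of_complex z) (vec2_of_complex z) (vec2_of_complex z)"
    by blast
  have "vec2_of_complex z \<in> S1"
    using cmod_cube_root_cis[OF z] by (simp add: in_S1_iff_cmod)
  then have "is_best_rank_one (T_theta \<theta>) B"
    using z by (simp add: B is_best_rank_one_T_theta_outer3_iff T_theta_cube_form_eq_1_iff)
  moreover have "is_sym B"
    using is_sym_scaleR_outer3_parallel[of _ _ _ 1] by (simp add: B)
  ultimately show "B \<in> {B. is_best_rank_one (T_theta \<theta>) B \<and> is_sym B}"
    by simp
qed

lemma inj_outer3_cube: "inj (\<lambda>v :: real^2. outer3 v v v)"
proof (rule injI)
  fix v w :: "real^2"
  assume eq: "outer3 v v v = outer3 w w w"
  have "(v$1)^3 = (w$1)^3" "(v$2)^3 = (w$2)^3"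
    using arg_cong[OF eq, of "\<lambda>T. T$1$1$1"] arg_cong[OF eq, of "\<lambda>T. T$2$2$2"]
    by (simp_all add: outer3_def power3_eq_cube)
  then have "root 3 ((v$1)^3) = root 3 ((w$1)^3)" "root 3 ((v$2)^3) = root 3 ((w$2)^3)"
    by simp_all
  then show "v = w"
    by (simp add: odd_real_root_power_cancel vec2_eq_iff)
qed

lemma inj_vec2_of_complex: "inj vec2_of_complex"
  by (metis injI complex_of_vec2_inverse)

lemma card_sym_best_rank_one_T_theta:
  "card {B. is_best_rank_one (T_theta \<theta>) B \<and> is_sym B} = 3"
proof -
  have "card {z::complex. z^3 = cis \<theta>} = 3"
    by (rule card_nth_roots) simp_all
  then show ?thesis
    using inj_outer3_cube inj_vec2_of_complex
    by (simp add: sym_best_rank_one_T_theta_eq card_image inj_on_subset image_subset_iff)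
qed

theorem theorem4p1:
  fixes T :: tensor3
  assumes "is_sym T"
    and "\<exists>B. is_best_rank_one T B \<and> \<not> is_sym B"
  shows "(\<exists>c \<theta>. c \<noteq> 0 \<and> 0 \<le> \<theta> \<and> \<theta> < 2 * pi \<and> T = c *\<^sub>R T_theta \<theta>)
    \<and> (\<forall>\<theta>. (\<forall>u v. u \<in> S1 \<and> v \<in> S1 \<longrightarrow>
                 (\<exists>!w. w \<in> S1 \<and> is_best_rank_one (T_theta \<theta>) (outer3 u v w)))
          \<and> card {B. is_best_rank_one (T_theta \<theta>) B \<and> is_sym B} = 3)"
proof (intro conjI allI impI)
  obtain B where "is_best_rank_one T B" "\<not> is_sym B"
    using assms(2) by blast
  then have "T$1$1$1 + T$1$2$2 = 0" "T$1$1$2 + T$2$2$2 = 0" "T \<noteq> 0"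
    using trace_free_if_best_rank_one_not_sym[OF assms(1)] by blast+
  then show "\<exists>c \<theta>. c \<noteq> 0 \<and> 0 \<le> \<theta> \<and> \<theta> < 2 * pi \<and> T = c *\<^sub>R T_theta \<theta>"
    by (rule sym_trace_free_eq_T_theta[OF assms(1)])
next
  fix \<theta> u v
  assume "u \<in> S1 \<and> v \<in> S1"
  then show "\<exists>!w. w \<in> S1 \<and> is_best_rank_one (T_theta \<theta>) (outer3 u v w)"
    using T_theta_third_factor_unique[of u v \<theta>] is_best_rank_one_T_theta_outer3_iff by auto
next
  show "card {B. is_best_rank_one (T_theta \<theta>) B \<and> is_sym B} = 3" for \<theta>
    by (rule card_sym_best_rank_one_T_theta)
qed

end
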